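(* Let $H:\mathbb{R}^d\to\mathbb{R}^y$ satisfy, for constants $0<K_L\le K_U$, $$K_L\|\mathbf{x}_1-\mathbf{x}_2\| \le \|H(\mathbf{x}_1)-H(\mathbf{x}_2)\| \le K_U\|\mathbf{x}_1-\mathbf{x}_2\|\quad\text{for all }\mathbf{x}_1,\mathbf{x}_2\in\mathbb{R}^d,$$ with $\|\cdot\|$ the Euclidean norm. Let $\mathcal{D}$ be a distribution on $\mathbb{R}^d$ of natural queries, let $\mathbf{x},\mathbf{x}_1,\mathbf{x}_2$ be drawn from $\mathcal{D}$ with $\mathbf{x}_1,\mathbf{x}_2$ independent, and let $M_{\mathcal{D}} = \mathbb{E}[\|\mathbf{x}_1-\mathbf{x}_2\|]<\infty$. Let $\beta>0$ and let $\boldsymbol{\delta}\sim\mathcal{N}(0,\beta^2\mathbf{I}_d)$ be independent of $\mathbf{x}$. For a threshold $\tau>0$ define the detection rate $\alpha^{det}=\mathbb{P}[\|H(\mathbf{x})-H(\mathbf{x}+\boldsymbol{\delta})\|\le\tau]$ and the false positive rate $\alpha^{fp}=\mathbb{P}[\|H(\mathbf{x}_1)-H(\mathbf{x}_2)\|\le\tau]$, and assume $\alpha^{fp}<1$. Then $$\alpha^{det} \le \frac{1}{\Gamma(\frac d2)}\,\gamma\!\left(\frac d2,\ \frac12\left(\frac{K_U}{K_L}\,\frac{M_{\mathcal{D}}}{\beta}\,\frac{1}{1-\alpha^{fp}}\right)^{2}\right),$$ where $\gamma(s,x)=\int_0^x t^{s-1}e^{-t}\,dt$ is the lower incomplete Gamma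 function and $\Gamma(s)=\int_0^\infty t^{s-1}e^{-t}\,dt$ is the Gamma function.
   Context: Stateful defense model: a query is flagged as an attack query if and only if its feature vector under $H$ lies within Euclidean distance $\tau$ of the feature vector of some historical query. The attack query is $\mathbf{x}+\boldsymbol{\delta}$ with historical query $\mathbf{x}$; a false positive occurs when two independent natural queries $\mathbf{x}_1,\mathbf{x}_2$ have features within distance $\tau$. *)

theory Defs
  imports "HOL-Probability.Probability"
begin

definition gaussian_iso :: "real \<Rightarrow> (real ^ 'd) measure" where
  "gaussian_iso \<beta> = density lborel
     (\<lambda>v. ennreal ((2 * pi * \<beta>\<^sup>2) powr (- (real CARD('d) / 2))
                     * exp (- (norm v)\<^sup>2 / (2 * \<beta>\<^sup>2))))"

definition lower_inc_gamma :: "real \<Rightarrow> real \<Rightarrow> real" where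
  "lower_inc_gamma s x = (LBINT t=0..x. t powr (s - 1) * exp (- t))"

end

theory Submission
  imports Defs
begin

text \<open>A perturbed query \<open>x + \<delta>\<close> is detected only if \<open>\<parallel>H x - H (x + \<delta>)\<parallel> \<le> \<tau>\<close>, and the lower Lipschitz
  bound turns this into \<open>\<parallel>\<delta>\<parallel> \<le> \<tau> / K_L\<close>. The Gaussian mass of that ball is
  \<open>\<gamma>(d/2, (\<tau>/K_L)\<^sup>2 / 2\<beta>\<^sup>2) / \<Gamma>(d/2)\<close>, computed by the layer-cake formula. On the other hand,
  Markov's inequality for \<open>K_U \<parallel>x\<^sub>1 - x\<^sub>2\<parallel>\<close> gives \<open>1 - \<alpha>\<^sup>f\<^sup>p \<le> K_U M / \<tau>\<close>, i.e.
  \<open>\<tau> \<le> K_U M / (1 - \<alpha>\<^sup>f\<^sup>p)\<close>; monotonicity of \<open>\<gamma>\<close> in its second argument finishes the proof.\<close>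

lemma nn_integral_exp_minus_atLeast:
  "(\<integral>\<^sup>+w. ennreal (exp (- w)) * indicator {a..} w \<partial>lborel) = ennreal (exp (- a))"
  using nn_integral_has_integral_lebesgue'[OF _ has_integral_exp_minus_to_infinity[of 1 a]] by simp

lemma nn_integral_powr_atLeastAtMost:
  assumes "0 < s" "0 \<le> m"
  shows "(\<integral>\<^sup>+t. ennreal (t powr (s - 1)) * indicator {0..m} t \<partial>lborel) = ennreal (m powr s / s)"
  using nn_integral_has_integral_lebesgue'[OF _ has_integral_powr_from_0[of "s - 1" m]] assms by simp

lemma lower_inc_gamma_eq_set_integral:
  assumes "0 \<le> R"
  shows "lower_inc_gamma s R = (LBINT t:{0..R}. t powr (s - 1) * exp (- t))"
  unfolding lower_inc_gamma_def using interval_integral_Icc[OF assms]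
  by (simp add: zero_ereal_def)

lemma lower_inc_gamma_nonneg:
  assumes "0 \<le> R"
  shows "0 \<le> lower_inc_gamma s R"
  unfolding lower_inc_gamma_eq_set_integral[OF assms] set_lebesgue_integral_def
  by (intro Bochner_Integration.integral_nonneg) (simp add: indicator_def)

lemma lower_inc_gamma_nn_integral:
  assumes "0 < s" "0 \<le> R"
  shows "ennreal (lower_inc_gamma s R)
    = (\<integral>\<^sup>+t. ennreal (t powr (s - 1) * exp (- t)) * indicator {0..R} t \<partial>lborel)"
    (is "_ = ?N")
proof -
  have "?N \<le> ennreal (Gamma s)"
    unfolding Gamma_conv_nn_integral_real[OF \<open>0 < s\<close>]
    by (intro nn_integral_mono) (auto simp: indicator_def exp_minus field_simps)
  then have "?N < \<infinity>"
    by (simp add: le_less_trans)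
  moreover have "lower_inc_gamma s R = enn2real ?N"
  proof -
    have "lower_inc_gamma s R
        = enn2real (\<integral>\<^sup>+t. ennreal (indicator {0..R} t * (t powr (s - 1) * exp (- t))) \<partial>lborel)"
      unfolding lower_inc_gamma_eq_set_integral[OF \<open>0 \<le> R\<close>] set_lebesgue_integral_def
      by (simp add: integral_eq_nn_integral)
    also have "\<dots> = enn2real ?N"
      by (intro arg_cong[where f = enn2real] nn_integral_cong) (auto simp: indicator_def)
    finally show ?thesis .
  qed
  ultimately show ?thesis
    by simp
qed

lemma lower_inc_gamma_mono:
  assumes "0 < s" "0 \<le> x" "x \<le> y"
  shows "lower_inc_gamma s x \<le> lower_inc_gamma s y"
proof -
  have "ennreal (lower_inc_gamma s x) \<le> ennreal (lower_inc_gamma s y)"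
    unfolding lower_inc_gamma_nn_integral[OF \<open>0 < s\<close> \<open>0 \<le> x\<close>]
      lower_inc_gamma_nn_integral[OF \<open>0 < s\<close> order_trans[OF \<open>0 \<le> x\<close> \<open>x \<le> y\<close>]]
    using \<open>x \<le> y\<close> by (intro nn_integral_mono) (auto simp: indicator_def)
  then show ?thesis
    using lower_inc_gamma_nonneg assms by simp
qed

text \<open>Write \<open>min R w powr s\<close> as \<open>s * (\<integral>t\<in>{0..min R w}. t powr (s - 1))\<close> and swap the integrals.\<close>

lemma nn_integral_exp_min_powr:
  assumes "0 < s" "0 \<le> R"
  shows "(\<integral>\<^sup>+w. ennreal (exp (- w) * min R w powr s) * indicator {0..} w \<partial>lborel)
    = ennreal (s * lower_inc_gamma s R)"
proof -
  have inner_t: "(\<integral>\<^sup>+t. (if 0 \<le> t \<and> t \<le> R \<and> t \<le> w then ennreal (s * t powr (s - 1) * exp (- w)) else 0)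
      \<partial>lborel) = ennreal (exp (- w) * min R w powr s) * indicator {0..} w" for w
  proof -
    have "(\<integral>\<^sup>+t. (if 0 \<le> t \<and> t \<le> R \<and> t \<le> w then ennreal (s * t powr (s - 1) * exp (- w)) else 0) \<partial>lborel)
        = (\<integral>\<^sup>+t. ennreal (s * exp (- w)) * (ennreal (t powr (s - 1)) * indicator {0..min R w} t) \<partial>lborel)"
      using \<open>0 < s\<close> by (intro nn_integral_cong) (auto simp: indicator_def ennreal_mult mult_ac)
    also have "\<dots> = ennreal (exp (- w) * min R w powr s) * indicator {0..} w"
      using assms by (cases "0 \<le> w")
        (auto simp: nn_integral_cmult nn_integral_powr_atLeastAtMost ennreal_mult'[symmetric])
    finally show ?thesis .
  qed
  have inner_w: "(\<integral>\<^sup>+w. (if 0 \<le> t \<and> t \<le> R \<and> t \<le> w then ennreal (s * t powr (s - 1) * exp (- w)) else 0)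
      \<partial>lborel) = ennreal s * (ennreal (t powr (s - 1) * exp (- t)) * indicator {0..R} t)" for t
  proof -
    have "(\<integral>\<^sup>+w. (if 0 \<le> t \<and> t \<le> R \<and> t \<le> w then ennreal (s * t powr (s - 1) * exp (- w)) else 0) \<partial>lborel)
        = (\<integral>\<^sup>+w. ennreal (s * t powr (s - 1) * indicator {0..R} t) * (ennreal (exp (- w)) * indicator {t..} w) \<partial>lborel)"
      using \<open>0 < s\<close> by (intro nn_integral_cong) (auto simp: indicator_def ennreal_mult'[symmetric])
    also have "\<dots> = ennreal (s * t powr (s - 1) * indicator {0..R} t) * ennreal (exp (- t))"
      by (simp add: nn_integral_cmult nn_integral_exp_minus_atLeast)
    also have "\<dots> = ennreal s * (ennreal (t powr (s - 1) * exp (- t)) * indicator {0..R} t)"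
      using \<open>0 < s\<close> by (simp add: indicator_def ennreal_mult'[symmetric] mult_ac)
    finally show ?thesis .
  qed
  have "(\<integral>\<^sup>+w. ennreal (exp (- w) * min R w powr s) * indicator {0..} w \<partial>lborel)
     = (\<integral>\<^sup>+w. \<integral>\<^sup>+t. (if 0 \<le> t \<and> t \<le> R \<and> t \<le> w then ennreal (s * t powr (s - 1) * exp (- w)) else 0)
          \<partial>lborel \<partial>lborel)"
    by (simp add: inner_t)
  also have "\<dots> = (\<integral>\<^sup>+t. \<integral>\<^sup>+w. (if 0 \<le> t \<and> t \<le> R \<and> t \<le> w then ennreal (s * t powr (s - 1) * exp (- w)) else 0)
          \<partial>lborel \<partial>lborel)"
    by (rule lborel_pair.Fubini') simp
  also have "\<dots> = ennreal s * (\<integral>\<^sup>+t. ennreal (t powr (s - 1) * exp (- t)) * indicator {0..R} t \<partial>lborel)"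
    by (simp add: inner_w nn_integral_cmult)
  also have "\<dots> = ennreal (s * lower_inc_gamma s R)"
    using assms by (simp add: ennreal_mult'[of s] lower_inc_gamma_nn_integral)
  finally show ?thesis .
qed

lemma norm_le_sqrt_iff: "norm v \<le> sqrt y \<longleftrightarrow> (norm v)\<^sup>2 \<le> y"
  by (metis abs_norm_cancel real_le_rsqrt sqrt_ge_absD)

lemma norm_le_sqrt_min_iff:
  fixes c r w :: real
  assumes "0 < c" "0 \<le> r"
  shows "norm v \<le> sqrt (c * min (r\<^sup>2 / c) w) \<longleftrightarrow> (norm v)\<^sup>2 / c \<le> w \<and> norm v \<le> r"
proof -
  have "c * min (r\<^sup>2 / c) w = min (r\<^sup>2) (c * w)"
    using \<open>0 < c\<close> by (simp add: min_def field_simps)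
  moreover have "(norm v)\<^sup>2 \<le> r\<^sup>2 \<longleftrightarrow> norm v \<le> r"
    using \<open>0 \<le> r\<close> by simp
  ultimately show ?thesis
    using \<open>0 < c\<close> by (simp add: norm_le_sqrt_iff pos_divide_le_eq mult.commute conj_commute)
qed

text \<open>Layer cake: \<open>exp (- q) = \<integral>\<^sub>q\<^sup>\<infinity> exp (- w) dw\<close>; after swapping the integrals, the
  slice at level \<open>w\<close> is the ball of radius \<open>sqrt (c * min (r\<^sup>2 / c) w)\<close>.\<close>

lemma nn_integral_exp_norm_cball:
  fixes c r :: real
  assumes "0 < c" "0 \<le> r"
  defines "n \<equiv> real DIM('a::euclidean_space)"
  shows "(\<integral>\<^sup>+v. ennreal (exp (- (norm (v::'a))\<^sup>2 / c)) * indicator (cball 0 r) v \<partial>lborel)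
    = ennreal (unit_ball_vol n * c powr (n / 2) * (n / 2) * lower_inc_gamma (n / 2) (r\<^sup>2 / c))"
proof -
  define R where "R = r\<^sup>2 / c"
  have layer: "ennreal (exp (- (norm v)\<^sup>2 / c)) * indicator (cball 0 r) v
      = (\<integral>\<^sup>+w. (if (norm v)\<^sup>2 / c \<le> w \<and> norm v \<le> r then ennreal (exp (- w)) else 0) \<partial>lborel)" for v :: 'a
  proof -
    have "(\<integral>\<^sup>+w. (if (norm v)\<^sup>2 / c \<le> w \<and> norm v \<le> r then ennreal (exp (- w)) else 0) \<partial>lborel)
        = (\<integral>\<^sup>+w. ennreal (exp (- w)) * indicator {(norm v)\<^sup>2 / c..} w \<partial>lborel) * indicator (cball 0 r) v"
      by (subst nn_integral_multc[symmetric]) (auto intro!: nn_integral_cong simp: indicator_def)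
    then show ?thesis
      by (simp add: nn_integral_exp_minus_atLeast)
  qed
  have slice: "(\<integral>\<^sup>+v. (if (norm (v::'a))\<^sup>2 / c \<le> w \<and> norm v \<le> r then ennreal (exp (- w)) else 0) \<partial>lborel)
      = ennreal (unit_ball_vol n * c powr (n / 2))
          * (ennreal (exp (- w) * min R w powr (n / 2)) * indicator {0..} w)" for w
  proof (cases "0 \<le> w")
    case False
    then show ?thesis
      using \<open>0 < c\<close> by (auto intro!: nn_integral_zero' simp: not_le less_le_trans[OF _ divide_nonneg_pos])
  next
    case True
    have "sqrt (c * min R w) ^ DIM('a) = c powr (n / 2) * min R w powr (n / 2)"
      using \<open>0 < c\<close> True
      by (simp add: R_def n_def powr_half_sqrt_powr powr_realpow' real_sqrt_power powr_mult real_sqrt_mult power_mult_distrib)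
    then have ball: "emeasure lborel (cball (0::'a) (sqrt (c * min R w)))
        = ennreal (unit_ball_vol n * (c powr (n / 2) * min R w powr (n / 2)))"
      using \<open>0 < c\<close> True by (subst emeasure_cball) (auto simp: R_def n_def)
    have "(\<integral>\<^sup>+v. (if (norm (v::'a))\<^sup>2 / c \<le> w \<and> norm v \<le> r then ennreal (exp (- w)) else 0) \<partial>lborel)
        = (\<integral>\<^sup>+v. ennreal (exp (- w)) * indicator (cball (0::'a) (sqrt (c * min R w))) v \<partial>lborel)"
      by (intro nn_integral_cong) (simp add: indicator_def R_def norm_le_sqrt_min_iff[OF assms(1,2)])
    also have "\<dots> = ennreal (exp (- w)) * emeasure lborel (cball (0::'a) (sqrt (c * min R w)))"
      by (rule nn_integral_cmult_indicator) simp
    finally show ?thesis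
      using True \<open>0 < c\<close> by (simp add: ball n_def ennreal_mult[symmetric] mult_ac)
  qed
  have "(\<integral>\<^sup>+v. ennreal (exp (- (norm (v::'a))\<^sup>2 / c)) * indicator (cball 0 r) v \<partial>lborel)
     = (\<integral>\<^sup>+v. \<integral>\<^sup>+w. (if (norm (v::'a))\<^sup>2 / c \<le> w \<and> norm v \<le> r then ennreal (exp (- w)) else 0)
          \<partial>lborel \<partial>lborel)"
    by (intro nn_integral_cong layer)
  also have "\<dots> = (\<integral>\<^sup>+w. \<integral>\<^sup>+v. (if (norm (v::'a))\<^sup>2 / c \<le> w \<and> norm v \<le> r then ennreal (exp (- w)) else 0)
          \<partial>lborel \<partial>lborel)"
    by (rule lborel_pair.Fubini'[symmetric]) simp
  also have "\<dots> = ennreal (unit_ball_vol n * c powr (n / 2)) * ennreal (n / 2 * lower_inc_gamma (n / 2) R)"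
    using \<open>0 \<le> r\<close> \<open>0 < c\<close>
    by (simp add: slice nn_integral_cmult nn_integral_exp_min_powr n_def R_def)
  finally show ?thesis
    by (simp add: R_def n_def ennreal_mult'[symmetric] mult_ac)
qed

lemma unit_ball_vol_mult_eq:
  assumes "0 < s"
  shows "unit_ball_vol (2 * s) * s = pi powr s / Gamma s"
proof -
  have "Gamma (s + 1) = s * Gamma s"
    using assms by (intro Gamma_plus1) (auto dest: nonpos_Ints_nonpos)
  then show ?thesis
    using assms by (simp add: unit_ball_vol_def field_simps)
qed

lemma gaussian_normalisation:
  assumes "0 < \<beta>" "0 < s"
  shows "(2 * pi * \<beta>\<^sup>2) powr (- s) * (unit_ball_vol (2 * s) * (2 * \<beta>\<^sup>2) powr s * s) = 1 / Gamma s"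
proof -
  define c where "c = (2 * pi * \<beta>\<^sup>2) powr (- s)"
  have "(2 * pi * \<beta>\<^sup>2) powr s = pi powr s * (2 * \<beta>\<^sup>2) powr s"
    by (simp add: powr_mult[symmetric] mult_ac)
  then have cancel: "pi powr s * (c * (2 * \<beta>\<^sup>2) powr s) = 1"
    using \<open>0 < \<beta>\<close> by (simp add: c_def powr_minus field_simps)
  have "c * (unit_ball_vol (2 * s) * (2 * \<beta>\<^sup>2) powr s * s)
      = unit_ball_vol (2 * s) * s * (c * (2 * \<beta>\<^sup>2) powr s)"
    by (simp add: mult_ac)
  also have "\<dots> = pi powr s * (c * (2 * \<beta>\<^sup>2) powr s) / Gamma s"
    by (simp add: unit_ball_vol_mult_eq[OF \<open>0 < s\<close>])
  finally show ?thesis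
    using cancel by (simp add: c_def)
qed

lemma emeasure_gaussian_iso_cball:
  fixes \<beta> r :: real
  assumes "0 < \<beta>" "0 \<le> r"
  defines "s \<equiv> real CARD('d) / 2"
  shows "emeasure (gaussian_iso \<beta> :: (real ^ 'd) measure) (cball 0 r)
    = ennreal (lower_inc_gamma s (r\<^sup>2 / (2 * \<beta>\<^sup>2)) / Gamma s)"
proof -
  define c where "c = (2 * pi * \<beta>\<^sup>2) powr (- s)"
  have [measurable]: "cball (0::real ^ 'd) r \<in> sets borel"
    by simp
  have "emeasure (gaussian_iso \<beta> :: (real ^ 'd) measure) (cball 0 r)
      = (\<integral>\<^sup>+v. ennreal c * (ennreal (exp (- (norm (v::real ^ 'd))\<^sup>2 / (2 * \<beta>\<^sup>2))) * indicator (cball 0 r) v) \<partial>lborel)"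
    unfolding gaussian_iso_def
    by (subst emeasure_density) (auto intro!: nn_integral_cong simp: c_def s_def ennreal_mult' mult.assoc)
  also have "\<dots> = ennreal c * (\<integral>\<^sup>+v. ennreal (exp (- (norm (v::real ^ 'd))\<^sup>2 / (2 * \<beta>\<^sup>2))) * indicator (cball 0 r) v \<partial>lborel)"
    by (rule nn_integral_cmult) measurable
  also have "\<dots> = ennreal c * ennreal (unit_ball_vol (2 * s) * (2 * \<beta>\<^sup>2) powr s * s
                                        * lower_inc_gamma s (r\<^sup>2 / (2 * \<beta>\<^sup>2)))"
    by (subst nn_integral_exp_norm_cball) (use assms in \<open>simp_all add: s_def\<close>)
  also have "\<dots> = ennreal (c * (unit_ball_vol (2 * s) * (2 * \<beta>\<^sup>2) powr s * s)
                                * lower_inc_gamma s (r\<^sup>2 / (2 * \<beta>\<^sup>2)))"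
    by (simp add: c_def ennreal_mult'[symmetric] mult.assoc)
  also have "c * (unit_ball_vol (2 * s) * (2 * \<beta>\<^sup>2) powr s * s) = 1 / Gamma s"
    unfolding c_def using \<open>0 < \<beta>\<close> by (intro gaussian_normalisation) (simp_all add: s_def)
  finally show ?thesis
    by simp
qed

lemma sigma_finite_measure_gaussian_iso: "sigma_finite_measure (gaussian_iso \<beta>)"
  unfolding gaussian_iso_def
  by (subst sigma_finite_measure.sigma_finite_iff_density_finite[OF sigma_finite_lborel]) auto

lemma measure_pair_subset_Times_le:
  assumes "prob_space M" "sigma_finite_measure N"
    and "S \<subseteq> space M \<times> B" "B \<in> sets N" "emeasure N B < \<infinity>"
  shows "measure (M \<Otimes>\<^sub>M N) S \<le> measure N B"
proof -
  have "emeasure (M \<Otimes>\<^sub>M N) S \<le> emeasure (M \<Otimes>\<^sub>M N) (space M \<times> B)"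
    using assms(3,4) by (intro emeasure_mono) auto
  also have "\<dots> = emeasure N B"
    using assms(1,4) by (simp add: sigma_finite_measure.emeasure_pair_measure_Times[OF assms(2)]
        prob_space.emeasure_space_1)
  finally show ?thesis
    using assms(5) by (simp add: measure_def enn2real_mono)
qed

lemma prob_pair_lipschitz_far_le:
  fixes H :: "'a::euclidean_space \<Rightarrow> 'b::euclidean_space"
  assumes D: "prob_space D" "sets D = sets borel"
    and H: "K-lipschitz_on UNIV H"
    and int: "integrable (D \<Otimes>\<^sub>M D) (\<lambda>(x1, x2). norm (x1 - x2))"
    and "0 < \<tau>"
  shows "1 - measure (D \<Otimes>\<^sub>M D) {(x1, x2). norm (H x1 - H x2) \<le> \<tau>}
    \<le> K * (\<integral>(x1, x2). norm (x1 - x2) \<partial>(D \<Otimes>\<^sub>M D)) / \<tau>"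
proof -
  interpret P: prob_space "D \<Otimes>\<^sub>M D"
    using D(1) by (intro prob_space_pair)
  have space: "space (D \<Otimes>\<^sub>M D) = UNIV"
    using sets_eq_imp_space_eq[OF D(2)] by (simp add: space_pair_measure)
  have "H \<in> borel_measurable borel"
    using H by (intro borel_measurable_continuous_onI lipschitz_on_continuous_on)
  then have [measurable]: "H \<in> borel_measurable D"
    using measurable_cong_sets[OF D(2) refl] by blast
  define A where "A = {(x1, x2). norm (H x1 - H x2) \<le> \<tau>}"
  define u where "u = (\<lambda>(x1, x2). K * norm (x1 - x2 :: 'a))"
  have u_int: "integrable (D \<Otimes>\<^sub>M D) u"
    unfolding u_def using int by (auto simp: case_prod_unfold)
  have "A = {p \<in> space (D \<Otimes>\<^sub>M D). norm (H (fst p) - H (snd p)) \<le> \<tau>}"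
    by (auto simp: A_def space)
  also have "\<dots> \<in> sets (D \<Otimes>\<^sub>M D)"
    by measurable
  finally have A: "A \<in> sets (D \<Otimes>\<^sub>M D)" .
  have "1 - measure (D \<Otimes>\<^sub>M D) A = measure (D \<Otimes>\<^sub>M D) (space (D \<Otimes>\<^sub>M D) - A)"
    using P.prob_compl[OF A] by simp
  also have "\<dots> \<le> measure (D \<Otimes>\<^sub>M D) {p \<in> space (D \<Otimes>\<^sub>M D). \<tau> \<le> u p}"
  proof (rule P.finite_measure_mono)
    show "space (D \<Otimes>\<^sub>M D) - A \<subseteq> {p \<in> space (D \<Otimes>\<^sub>M D). \<tau> \<le> u p}"
    proof (clarsimp simp: A_def u_def space)
      fix x1 x2 :: 'a
      assume "\<not> norm (H x1 - H x2) \<le> \<tau>"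
      moreover have "norm (H x1 - H x2) \<le> K * norm (x1 - x2)"
        using H by (simp add: lipschitz_on_def dist_norm)
      ultimately show "\<tau> \<le> K * norm (x1 - x2)"
        by simp
    qed
    have [measurable]: "u \<in> borel_measurable (D \<Otimes>\<^sub>M D)"
      using u_int by (rule borel_measurable_integrable)
    show "{p \<in> space (D \<Otimes>\<^sub>M D). \<tau> \<le> u p} \<in> sets (D \<Otimes>\<^sub>M D)"
      by measurable
  qed
  also have "\<dots> \<le> (\<integral>p. u p \<partial>(D \<Otimes>\<^sub>M D)) / \<tau>"
    using H \<open>0 < \<tau>\<close> by (intro integral_Markov_inequality_measure[OF u_int])
      (auto simp: u_def lipschitz_on_def)
  also have "(\<integral>p. u p \<partial>(D \<Otimes>\<^sub>M D)) = K * (\<integral>(x1, x2). norm (x1 - x2) \<partial>(D \<Otimes>\<^sub>M D))"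
    by (simp add: u_def case_prod_unfold)
  finally show ?thesis
    by (simp add: A_def)
qed

lemma prob_gaussian_perturbation_close_le:
  fixes H :: "real ^ 'd \<Rightarrow> 'b::real_normed_vector"
  assumes D: "prob_space D" "sets D = sets borel"
    and expand: "\<And>x y. K * norm (x - y) \<le> norm (H x - H y)"
    and "0 < K" "0 \<le> \<tau>" "0 < \<beta>"
  defines "s \<equiv> real CARD('d) / 2"
  shows "measure (D \<Otimes>\<^sub>M gaussian_iso \<beta>) {(x, \<delta>). norm (H x - H (x + \<delta>)) \<le> \<tau>}
    \<le> lower_inc_gamma s ((\<tau> / K)\<^sup>2 / (2 * \<beta>\<^sup>2)) / Gamma s"
proof -
  have "{(x, \<delta>). norm (H x - H (x + \<delta>)) \<le> \<tau>} \<subseteq> space D \<times> cball 0 (\<tau> / K)"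
  proof (clarsimp simp: sets_eq_imp_space_eq[OF D(2)])
    fix x \<delta> :: "real ^ 'd"
    assume "norm (H x - H (x + \<delta>)) \<le> \<tau>"
    moreover have "K * norm \<delta> \<le> norm (H x - H (x + \<delta>))"
      using expand[of x "x + \<delta>"] by (simp add: norm_minus_commute)
    ultimately show "norm \<delta> \<le> \<tau> / K"
      using \<open>0 < K\<close> by (simp add: field_simps)
  qed
  moreover have ball: "emeasure (gaussian_iso \<beta>) (cball (0::real ^ 'd) (\<tau> / K))
      = ennreal (lower_inc_gamma s ((\<tau> / K)\<^sup>2 / (2 * \<beta>\<^sup>2)) / Gamma s)"
    using assms by (simp add: emeasure_gaussian_iso_cball)
  ultimately have "measure (D \<Otimes>\<^sub>M gaussian_iso \<beta>) {(x, \<delta>). norm (H x - H (x + \<delta>)) \<le> \<tau>}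
      \<le> measure (gaussian_iso \<beta>) (cball (0::real ^ 'd) (\<tau> / K))"
    by (intro measure_pair_subset_Times_le[OF D(1) sigma_finite_measure_gaussian_iso])
      (auto simp: gaussian_iso_def)
  also have "\<dots> = lower_inc_gamma s ((\<tau> / K)\<^sup>2 / (2 * \<beta>\<^sup>2)) / Gamma s"
    using ball lower_inc_gamma_nonneg[of "(\<tau> / K)\<^sup>2 / (2 * \<beta>\<^sup>2)" s] by (simp add: measure_def s_def)
  finally show ?thesis .
qed

theorem theorem2:
  fixes H :: "real ^ 'd \<Rightarrow> real ^ 'y"
    and D :: "(real ^ 'd) measure"
    and K_L K_U \<beta> \<tau> :: real
  assumes KL_pos: "0 < K_L" and KL_le_KU: "K_L \<le> K_U"
    and bilip: "\<And>x1 x2. K_L * norm (x1 - x2) \<le> norm (H x1 - H x2)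
                     \<and> norm (H x1 - H x2) \<le> K_U * norm (x1 - x2)"
    and D_prob: "prob_space D" and D_sets: "sets D = sets borel"
    and M_finite: "integrable (D \<Otimes>\<^sub>M D) (\<lambda>(x1, x2). norm (x1 - x2))"
    and beta_pos: "0 < \<beta>" and tau_pos: "0 < \<tau>"
    and fp_lt1: "measure (D \<Otimes>\<^sub>M D) {(x1, x2). norm (H x1 - H x2) \<le> \<tau>} < 1"
  shows "measure (D \<Otimes>\<^sub>M gaussian_iso \<beta>) {(x, \<delta>). norm (H x - H (x + \<delta>)) \<le> \<tau>}
     \<le> lower_inc_gamma (real CARD('d) / 2)
          ((1/2) * ((K_U / K_L) * ((\<integral>p. (case p of (x1, x2) \<Rightarrow> norm (x1 - x2)) \<partial>(D \<Otimes>\<^sub>M D)) / \<beta>)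
                    * (1 / (1 - measure (D \<Otimes>\<^sub>M D) {(x1, x2). norm (H x1 - H x2) \<le> \<tau>})))\<^sup>2)
        / Gamma (real CARD('d) / 2)"
proof -
  define s where "s = real CARD('d) / 2"
  define M where "M = (\<integral>p. (case p of (x1, x2) \<Rightarrow> norm (x1 - x2)) \<partial>(D \<Otimes>\<^sub>M D))"
  define \<alpha> where "\<alpha> = measure (D \<Otimes>\<^sub>M D) {(x1, x2). norm (H x1 - H x2) \<le> \<tau>}"
  define X where "X = (K_U / K_L) * (M / \<beta>) * (1 / (1 - \<alpha>))"
  have "K_U-lipschitz_on UNIV H"
    using bilip KL_pos KL_le_KU by (intro lipschitz_onI) (auto simp: dist_norm)
  from prob_pair_lipschitz_far_le[OF D_prob D_sets this M_finite tau_pos]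
  have "\<tau> \<le> K_U * M / (1 - \<alpha>)"
    using fp_lt1 tau_pos by (simp add: M_def \<alpha>_def field_simps)
  then have "\<tau> / K_L / \<beta> \<le> K_U * M / (1 - \<alpha>) / K_L / \<beta>"
    using KL_pos beta_pos by (intro divide_right_mono) auto
  then have "\<tau> / K_L / \<beta> \<le> X"
    by (simp add: X_def mult_ac)
  then have "(\<tau> / K_L / \<beta>)\<^sup>2 \<le> X\<^sup>2"
    using KL_pos beta_pos tau_pos by (intro power_mono) auto
  then have "(\<tau> / K_L)\<^sup>2 / (2 * \<beta>\<^sup>2) \<le> (1/2) * X\<^sup>2"
    by (simp add: power_divide power_mult_distrib)
  then have "lower_inc_gamma s ((\<tau> / K_L)\<^sup>2 / (2 * \<beta>\<^sup>2)) / Gamma s \<le> lower_inc_gamma s ((1/2) * X\<^sup>2) / Gamma s"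
    by (intro divide_right_mono lower_inc_gamma_mono) (auto simp: s_def)
  moreover have "measure (D \<Otimes>\<^sub>M gaussian_iso \<beta>) {(x, \<delta>). norm (H x - H (x + \<delta>)) \<le> \<tau>}
      \<le> lower_inc_gamma s ((\<tau> / K_L)\<^sup>2 / (2 * \<beta>\<^sup>2)) / Gamma s"
    using bilip KL_pos tau_pos beta_pos unfolding s_def
    by (intro prob_gaussian_perturbation_close_le[OF D_prob D_sets]) auto
  ultimately show ?thesis
    by (simp add: s_def M_def \<alpha>_def X_def)
qed

end
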